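(* Let $\mathfrak g$ be a finite-dimensional Lie algebra over a field $\mathbb K$ of characteristic zero, $\mathfrak h\subset\mathfrak g$ an ideal, and $f$ a polynomial function on $\mathfrak g^*$ such that $f(x+l)=f(x)$ for all $x\in\mathfrak g^*$ and all $l\in\mathrm{St}(\pi(x))^\perp$. Then $f\in\operatorname{Ann}(\mathfrak h)$.
   Context: $\pi:\mathfrak g^*\to\mathfrak h^*$ is restriction. For $h\in\mathfrak h^*$, $\mathrm{St}(h)=\{\xi\in\mathfrak g\mid\langle h,[\xi,\eta]\rangle=0\ \forall\eta\in\mathfrak h\}$, and $\mathrm{St}(h)^\perp=\{l\in\mathfrak g^*\mid\langle l,\xi\rangle=0\ \forall\xi\in\mathrm{St}(h)\}$. $S(\mathfrak g)$ is the polynomial algebra on $\mathfrak g^*$ with Lie–Poisson bracket $\{f,g\}(x)=\langle x,[df(x),dg(x)]\rangle$, and $\operatorname{Ann}(\mathfrak h)=\{f\in S(\mathfrak g)\mid\{f,\eta\}=0\ \forall\eta\in\mathfrak h\}$. *)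

theory Defs
  imports "HOL-Computational_Algebra.Polynomial"
begin

text \<open>The dual g* is identified with
  'n \<Rightarrow> 'a via the pairing below (dual basis).\<close>

definition pair :: "('n::finite \<Rightarrow> 'a::field) \<Rightarrow> ('n \<Rightarrow> 'a) \<Rightarrow> 'a" where
  "pair x \<xi> = (\<Sum>i\<in>UNIV. x i * \<xi> i)"

definition lie_algebra :: "(('n::finite \<Rightarrow> 'a::field) \<Rightarrow> ('n \<Rightarrow> 'a) \<Rightarrow> ('n \<Rightarrow> 'a)) \<Rightarrow> bool" where
  "lie_algebra br \<longleftrightarrow>
     (\<forall>a \<xi> \<eta> \<zeta>. br (\<lambda>i. a * \<xi> i + \<eta> i) \<zeta> = (\<lambda>k. a * br \<xi> \<zeta> k + br \<eta> \<zeta> k)) \<and>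
     (\<forall>a \<xi> \<eta> \<zeta>. br \<zeta> (\<lambda>i. a * \<xi> i + \<eta> i) = (\<lambda>k. a * br \<zeta> \<xi> k + br \<zeta> \<eta> k)) \<and>
     (\<forall>\<xi>. br \<xi> \<xi> = (\<lambda>k. 0)) \<and>
     (\<forall>\<xi> \<eta> \<zeta>. (\<lambda>k. br \<xi> (br \<eta> \<zeta>) k + br \<eta> (br \<zeta> \<xi>) k + br \<zeta> (br \<xi> \<eta>) k) = (\<lambda>k. 0))"

definition lie_ideal :: "(('n::finite \<Rightarrow> 'a::field) \<Rightarrow> ('n \<Rightarrow> 'a) \<Rightarrow> ('n \<Rightarrow> 'a)) \<Rightarrow> ('n \<Rightarrow> 'a) set \<Rightarrow> bool" where
  "lie_ideal br h \<longleftrightarrow>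
     (\<lambda>k. 0) \<in> h \<and>
     (\<forall>a \<xi> \<eta>. \<xi> \<in> h \<longrightarrow> \<eta> \<in> h \<longrightarrow> (\<lambda>i. a * \<xi> i + \<eta> i) \<in> h) \<and>
     (\<forall>\<xi> \<eta>. \<eta> \<in> h \<longrightarrow> br \<xi> \<eta> \<in> h)"

text \<open>Restriction map pi : g* \<rightarrow> h*; elements of h* are functionals on h
  (value undefined outside h).\<close>
definition restr :: "('n::finite \<Rightarrow> 'a::field) set \<Rightarrow> ('n \<Rightarrow> 'a) \<Rightarrow> (('n \<Rightarrow> 'a) \<Rightarrow> 'a)" where
  "restr h x = (\<lambda>\<zeta>. if \<zeta> \<in> h then pair x \<zeta> else undefined)"

definition St :: "(('n::finite \<Rightarrow> 'a::field) \<Rightarrow> ('n \<Rightarrow> 'a) \<Rightarrow> ('n \<Rightarrow> 'a)) \<Rightarrow> ('n \<Rightarrow> 'a) set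
                   \<Rightarrow> (('n \<Rightarrow> 'a) \<Rightarrow> 'a) \<Rightarrow> ('n \<Rightarrow> 'a) set" where
  "St br h hf = {\<xi>. \<forall>\<eta>\<in>h. hf (br \<xi> \<eta>) = 0}"

definition perp :: "('n::finite \<Rightarrow> 'a::field) set \<Rightarrow> ('n \<Rightarrow> 'a) set" where
  "perp S = {l. \<forall>\<xi>\<in>S. pair l \<xi> = 0}"

inductive_set poly_fun :: "(('n::finite \<Rightarrow> 'a::field) \<Rightarrow> 'a) set" where
  const: "(\<lambda>x. c) \<in> poly_fun"
| coord: "(\<lambda>x. x i) \<in> poly_fun"
| add: "f \<in> poly_fun \<Longrightarrow> g \<in> poly_fun \<Longrightarrow> (\<lambda>x. f x + g x) \<in> poly_fun"
| mult: "f \<in> poly_fun \<Longrightarrow> g \<in> poly_fun \<Longrightarrow> (\<lambda>x. f x * g x) \<in> poly_fun"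

text \<open>Directional derivative of a polynomial function: the linear coefficient
  of the (unique, as K is infinite) univariate polynomial t \<mapsto> f(x + t v).\<close>
definition dir_deriv :: "(('n::finite \<Rightarrow> 'a::field_char_0) \<Rightarrow> 'a) \<Rightarrow> ('n \<Rightarrow> 'a) \<Rightarrow> ('n \<Rightarrow> 'a) \<Rightarrow> 'a" where
  "dir_deriv f x v = coeff (THE p. \<forall>t. poly p t = f (\<lambda>i. x i + t * v i)) 1"

text \<open>Differential df(x) \<in> g = (g*)*, in coordinates.\<close>
definition differential :: "(('n::finite \<Rightarrow> 'a::field_char_0) \<Rightarrow> 'a) \<Rightarrow> ('n \<Rightarrow> 'a) \<Rightarrow> ('n \<Rightarrow> 'a)" where
  "differential f x = (\<lambda>i. dir_deriv f x (\<lambda>j. if j = i then 1 else 0))"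

definition poisson :: "(('n::finite \<Rightarrow> 'a::field_char_0) \<Rightarrow> ('n \<Rightarrow> 'a) \<Rightarrow> ('n \<Rightarrow> 'a))
     \<Rightarrow> (('n \<Rightarrow> 'a) \<Rightarrow> 'a) \<Rightarrow> (('n \<Rightarrow> 'a) \<Rightarrow> 'a) \<Rightarrow> ('n \<Rightarrow> 'a) \<Rightarrow> 'a" where
  "poisson br f g x = pair x (br (differential f x) (differential g x))"

text \<open>Ann(h): polynomial functions Poisson-commuting with every \<eta> \<in> h
  (\<eta> viewed as the linear function x \<mapsto> <x,\<eta>> on g*).\<close>
definition Ann :: "(('n::finite \<Rightarrow> 'a::field_char_0) \<Rightarrow> ('n \<Rightarrow> 'a) \<Rightarrow> ('n \<Rightarrow> 'a))
     \<Rightarrow> ('n \<Rightarrow> 'a) set \<Rightarrow> (('n \<Rightarrow> 'a) \<Rightarrow> 'a) set" where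
  "Ann br h = {f \<in> poly_fun. \<forall>\<eta>\<in>h. \<forall>x. poisson br f (\<lambda>y. pair y \<eta>) x = 0}"

end

theory Submission
  imports Defs
begin

text \<open>For \<eta> \<in> h, the functional \<xi> \<mapsto> <x,[\<xi>,\<eta>]> vanishes on St(\<pi>(x)), because [\<xi>,\<eta>] lies in
  the ideal h; hence it lies in the annihilator of St(\<pi>(x)). The invariance of f along this direction
  forces the derivative of f at x in that direction, which is <x,[df(x),\<eta>]> = {f,\<eta>}(x),
  to vanish.\<close>

definition unit_vec :: "'n \<Rightarrow> 'n \<Rightarrow> 'a::zero_neq_one" where
  "unit_vec i = (\<lambda>k. if k = i then 1 else 0)"

definition ad_dual :: "(('n::finite \<Rightarrow> 'a::field) \<Rightarrow> ('n \<Rightarrow> 'a) \<Rightarrow> ('n \<Rightarrow> 'a))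
     \<Rightarrow> ('n \<Rightarrow> 'a) \<Rightarrow> ('n \<Rightarrow> 'a) \<Rightarrow> ('n \<Rightarrow> 'a)" where
  "ad_dual br x \<eta> = (\<lambda>i. pair x (br (unit_vec i) \<eta>))"

lemma pair_unit_vec: "pair v (unit_vec i) = v i"
  by (simp add: pair_def unit_vec_def if_distrib cong: if_cong)

lemma pair_commute: "pair v w = pair w v"
  by (simp add: pair_def mult.commute)

lemma pair_scale_left: "pair (\<lambda>i. t * v i) w = t * pair v w"
  by (simp add: pair_def sum_distrib_left mult.assoc)

lemma sum_unit_vec: "(\<lambda>k. \<Sum>i\<in>UNIV. \<xi> i * unit_vec i k) = (\<xi> :: 'n::finite \<Rightarrow> 'a::field)"
  by (simp add: unit_vec_def if_distrib cong: if_cong)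

lemma perp_scale: "v \<in> perp S \<Longrightarrow> (\<lambda>i. t * v i) \<in> perp S"
  by (simp add: perp_def pair_scale_left)

lemma lie_bracket_linear_left:
  assumes "lie_algebra br"
  shows "br (\<lambda>i. a * \<xi> i + \<eta> i) \<zeta> = (\<lambda>k. a * br \<xi> \<zeta> k + br \<eta> \<zeta> k)"
  using assms unfolding lie_algebra_def by blast

lemma lie_bracket_zero_left:
  assumes "lie_algebra br"
  shows "br (\<lambda>k. 0) \<zeta> = (\<lambda>k. 0)"
proof -
  from lie_bracket_linear_left[OF assms, of 1 "\<lambda>k. 0" "\<lambda>k. 0"]
  have "br (\<lambda>k. 0) \<zeta> k = br (\<lambda>k. 0) \<zeta> k + br (\<lambda>k. 0) \<zeta> k" for k
    by (simp only: mult_1 add_0 fun_eq_iff)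
  then have "br (\<lambda>k. 0) \<zeta> k = 0" for k
    by (metis add_cancel_right_right)
  then show ?thesis by (simp add: fun_eq_iff)
qed

lemma lie_bracket_sum_left:
  assumes "lie_algebra br" "finite S"
  shows "br (\<lambda>k. \<Sum>i\<in>S. c i * u i k) \<zeta> = (\<lambda>k. \<Sum>i\<in>S. c i * br (u i) \<zeta> k)"
  using assms(2)
proof induction
  case empty
  show ?case using lie_bracket_zero_left[OF assms(1)] by simp
next
  case (insert j S)
  then show ?case
    using lie_bracket_linear_left[OF assms(1), of "c j" "u j" "\<lambda>k. \<Sum>i\<in>S. c i * u i k" \<zeta>]
    by simp
qed

lemma pair_ad_dual:
  assumes "lie_algebra br"
  shows "pair (ad_dual br x \<eta>) \<xi> = pair x (br \<xi> \<eta>)"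
proof -
  have "br \<xi> \<eta> = (\<lambda>k. \<Sum>i\<in>UNIV. \<xi> i * br (unit_vec i) \<eta> k)"
    using lie_bracket_sum_left[OF assms, of UNIV \<xi> unit_vec \<eta>] by (simp add: sum_unit_vec)
  then have "pair x (br \<xi> \<eta>) = (\<Sum>k\<in>UNIV. \<Sum>i\<in>UNIV. \<xi> i * (x k * br (unit_vec i) \<eta> k))"
    by (simp add: pair_def sum_distrib_left mult.left_commute)
  also have "\<dots> = (\<Sum>i\<in>UNIV. \<xi> i * pair x (br (unit_vec i) \<eta>))"
    by (subst sum.swap) (simp add: pair_def sum_distrib_left)
  finally show ?thesis
    by (simp add: ad_dual_def pair_def mult.commute)
qed

lemma ad_dual_in_perp_St:
  assumes "lie_algebra br" "lie_ideal br h" "\<eta> \<in> h"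
  shows "ad_dual br x \<eta> \<in> perp (St br h (restr h x))"
  unfolding perp_def
proof (intro CollectI ballI)
  fix \<xi> assume "\<xi> \<in> St br h (restr h x)"
  then have "restr h x (br \<xi> \<eta>) = 0" using assms(3) unfolding St_def by blast
  moreover have "br \<xi> \<eta> \<in> h" using assms(2,3) unfolding lie_ideal_def by blast
  ultimately show "pair (ad_dual br x \<eta>) \<xi> = 0"
    by (simp add: restr_def pair_ad_dual[OF assms(1)])
qed

lemma the_poly_eqI:
  fixes p :: "'a::field_char_0 poly"
  assumes "\<forall>t. poly p t = F t"
  shows "(THE q. \<forall>t. poly q t = F t) = p"
proof (rule the_equality)
  fix q :: "'a poly" assume "\<forall>t. poly q t = F t"
  then show "q = p" using assms by (simp add: poly_eq_poly_eq_iff[symmetric] fun_eq_iff)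
qed (fact assms)

definition is_poly_gradient :: "(('n::finite \<Rightarrow> 'a::field) \<Rightarrow> 'a) \<Rightarrow> (('n \<Rightarrow> 'a) \<Rightarrow> ('n \<Rightarrow> 'a)) \<Rightarrow> bool"
  where "is_poly_gradient f g \<longleftrightarrow>
    (\<forall>x v. \<exists>p. (\<forall>t. poly p t = f (\<lambda>i. x i + t * v i)) \<and> coeff p 1 = pair v (g x))"

lemma poly_fun_has_gradient:
  fixes f :: "('n::finite \<Rightarrow> 'a::field_char_0) \<Rightarrow> 'a"
  assumes "f \<in> poly_fun"
  shows "\<exists>g. is_poly_gradient f g"
  using assms unfolding is_poly_gradient_def
proof induction
  case (const c)
  show ?case
    by (rule exI[of _ "\<lambda>x i. 0"]) (auto intro: exI[of _ "[:c:]"] simp: pair_def)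
next
  case (coord j)
  show ?case
    by (rule exI[of _ "\<lambda>x. unit_vec j"])
       (auto intro!: exI[of _ "[:x j, v j:]" for x v :: "'n \<Rightarrow> 'a"] simp: pair_unit_vec)
next
  case (add f1 f2)
  then obtain g1 g2
    where g1: "\<forall>x v. \<exists>p. (\<forall>t. poly p t = f1 (\<lambda>i. x i + t * v i)) \<and> coeff p 1 = pair v (g1 x)"
      and g2: "\<forall>x v. \<exists>p. (\<forall>t. poly p t = f2 (\<lambda>i. x i + t * v i)) \<and> coeff p 1 = pair v (g2 x)"
    by blast
  show ?case
  proof (intro exI[of _ "\<lambda>x i. g1 x i + g2 x i"] allI)
    fix x v
    from g1 g2 obtain p1 p2
      where "\<forall>t. poly p1 t = f1 (\<lambda>i. x i + t * v i)" "coeff p1 1 = pair v (g1 x)"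
        and "\<forall>t. poly p2 t = f2 (\<lambda>i. x i + t * v i)" "coeff p2 1 = pair v (g2 x)"
      by meson
    then show "\<exists>p. (\<forall>t. poly p t = f1 (\<lambda>i. x i + t * v i) + f2 (\<lambda>i. x i + t * v i)) \<and>
        coeff p 1 = pair v (\<lambda>i. g1 x i + g2 x i)"
      by (intro exI[of _ "p1 + p2"]) (simp add: pair_def distrib_left sum.distrib)
  qed
next
  case (mult f1 f2)
  then obtain g1 g2
    where g1: "\<forall>x v. \<exists>p. (\<forall>t. poly p t = f1 (\<lambda>i. x i + t * v i)) \<and> coeff p 1 = pair v (g1 x)"
      and g2: "\<forall>x v. \<exists>p. (\<forall>t. poly p t = f2 (\<lambda>i. x i + t * v i)) \<and> coeff p 1 = pair v (g2 x)"
    by blast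
  show ?case
  proof (intro exI[of _ "\<lambda>x i. f1 x * g2 x i + f2 x * g1 x i"] allI)
    fix x v
    from g1 g2 obtain p1 p2
      where p1: "\<forall>t. poly p1 t = f1 (\<lambda>i. x i + t * v i)" "coeff p1 1 = pair v (g1 x)"
        and p2: "\<forall>t. poly p2 t = f2 (\<lambda>i. x i + t * v i)" "coeff p2 1 = pair v (g2 x)"
      by meson
    have "coeff p1 0 = f1 x" "coeff p2 0 = f2 x"
      using p1(1)[rule_format, of 0] p2(1)[rule_format, of 0] by (simp_all add: poly_0_coeff_0)
    then have "coeff (p1 * p2) 1 = pair v (\<lambda>i. f1 x * g2 x i + f2 x * g1 x i)"
      using p1(2) p2(2)
      by (simp add: coeff_mult atMost_Suc pair_def sum_distrib_left sum.distrib algebra_simps)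
    with p1(1) p2(1) show "\<exists>p. (\<forall>t. poly p t = f1 (\<lambda>i. x i + t * v i) * f2 (\<lambda>i. x i + t * v i)) \<and>
        coeff p 1 = pair v (\<lambda>i. f1 x * g2 x i + f2 x * g1 x i)"
      by (intro exI[of _ "p1 * p2"]) simp
  qed
qed

lemma dir_deriv_eq_pair_differential:
  assumes "f \<in> poly_fun"
  shows "dir_deriv f x v = pair v (differential f x)"
proof -
  obtain g where g: "is_poly_gradient f g"
    using poly_fun_has_gradient[OF assms] by blast
  have dir_deriv_g: "dir_deriv f x w = pair w (g x)" for w
  proof -
    obtain p where "\<forall>t. poly p t = f (\<lambda>i. x i + t * w i)" "coeff p 1 = pair w (g x)"
      using g unfolding is_poly_gradient_def by blast
    then show ?thesis by (simp add: dir_deriv_def the_poly_eqI)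
  qed
  have "differential f x = g x"
    unfolding differential_def unit_vec_def[symmetric] dir_deriv_g
    by (simp add: fun_eq_iff pair_commute[of "unit_vec _"] pair_unit_vec)
  then show ?thesis by (simp add: dir_deriv_g)
qed

lemma dir_deriv_eq_0_if_constant_on_line:
  assumes "\<forall>t. f (\<lambda>i. x i + t * v i) = f x"
  shows "dir_deriv f x v = (0 :: 'a::field_char_0)"
proof -
  have line: "\<forall>t. poly [:f x:] t = f (\<lambda>i. x i + t * v i)" using assms by simp
  show ?thesis unfolding dir_deriv_def the_poly_eqI[OF line] by simp
qed

lemma differential_pair_right: "differential (\<lambda>y. pair y \<eta>) x = (\<eta> :: 'n::finite \<Rightarrow> 'a::field_char_0)"
proof
  fix i
  have "pair (\<lambda>j. x j + t * unit_vec i j) \<eta> = pair x \<eta> + t * pair (unit_vec i) \<eta>" for t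
    by (simp add: pair_def algebra_simps sum.distrib sum_distrib_left)
  then have line: "\<forall>t. poly [:pair x \<eta>, \<eta> i:] t = pair (\<lambda>j. x j + t * unit_vec i j) \<eta>"
    by (simp add: pair_commute[of "unit_vec i"] pair_unit_vec)
  show "differential (\<lambda>y. pair y \<eta>) x i = \<eta> i"
    unfolding differential_def unit_vec_def[symmetric] dir_deriv_def the_poly_eqI[OF line] by simp
qed

theorem corollary2:
  fixes br :: "('n::finite \<Rightarrow> 'a::field_char_0) \<Rightarrow> ('n \<Rightarrow> 'a) \<Rightarrow> ('n \<Rightarrow> 'a)"
    and h :: "('n \<Rightarrow> 'a) set"
    and f :: "('n \<Rightarrow> 'a) \<Rightarrow> 'a"
  assumes "lie_algebra br"
    and "lie_ideal br h"
    and "f \<in> poly_fun"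
    and "\<forall>x l. l \<in> perp (St br h (restr h x)) \<longrightarrow> f (\<lambda>i. x i + l i) = f x"
  shows "f \<in> Ann br h"
  unfolding Ann_def
proof (intro CollectI conjI ballI allI)
  fix \<eta> x assume "\<eta> \<in> h"
  then have "\<forall>t. f (\<lambda>i. x i + t * ad_dual br x \<eta> i) = f x"
    using assms(4) perp_scale ad_dual_in_perp_St[OF assms(1,2)] by blast
  then have "pair (ad_dual br x \<eta>) (differential f x) = 0"
    using dir_deriv_eq_0_if_constant_on_line dir_deriv_eq_pair_differential[OF assms(3)] by metis
  then show "poisson br f (\<lambda>y. pair y \<eta>) x = 0"
    by (simp add: poisson_def differential_pair_right pair_ad_dual[OF assms(1)])
qed (fact assms(3))

end
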